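(* Let $M^{2n+1}(f,Q,\xi,\eta,g)$ be a weak nearly Sasakian manifold satisfying $(\nabla_X\widetilde Q)Y=0$ for all $X\in TM$, $Y\in\ker\eta$, and let $h=\nabla\xi+f$ (i.e., $hX=\nabla_X\xi+fX$). Then $h=0$ if and only if the manifold is Sasakian (i.e., $Q=\mathrm{id}$ and $(f,\xi,\eta,g)$ is a Sasakian structure).
   Context: A weak almost contact metric structure on $M^{2n+1}$ consists of a $(1,1)$-tensor field $f$ of rank $2n$, a vector field $\xi$, a $1$-form $\eta$, a nonsingular $(1,1)$-tensor field $Q$ and a Riemannian metric $g$ such that $f^2=-Q+\eta\otimes\xi$, $\eta(\xi)=1$, $Q\xi=\xi$, $\ker\eta$ is $f$-invariant, and $g(fX,fY)=g(X,QY)-\eta(X)\eta(Y)$. $\widetilde Q=Q-\mathrm{id}$, $\nabla$ is the Levi-Civita connection. Weak nearly Sasakian means $(\nabla_Xf)Y+(\nabla_Yf)X=2g(X,Y)\xi-\eta(Y)X-\eta(X)Y$ for all $X,Y$. A Sasakian structure is one with $Q=\mathrm{id}$ and $(\nabla_Xf)Y=g(X,Y)\xi-\eta(Y)X$ for all $X,Y$. *)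

theory Defs
  imports "HOL-Analysis.Analysis"
begin

text \<open>Local (coordinate) model of a Riemannian manifold: an open set U in real^'n
  with a metric given by a symmetric positive definite matrix field G.
  Vector fields are maps U -> real^'n, (1,1)-tensor fields are matrix fields,
  a 1-form eta is represented by its coefficient vector (eta(v) = eta p \<bullet> v).\<close>

primrec itpd :: "'n list \<Rightarrow> (real^'n \<Rightarrow> 'b::real_normed_vector) \<Rightarrow> real^'n \<Rightarrow> 'b" where
  "itpd [] F = F"
| "itpd (i # is) F = (\<lambda>p. frechet_derivative (itpd is F) (at p) (axis i 1))"

definition smooth_on :: "(real^'n) set \<Rightarrow> (real^'n \<Rightarrow> 'b::real_normed_vector) \<Rightarrow> bool" where
  "smooth_on U F \<longleftrightarrow> (\<forall>is. itpd is F differentiable_on U)"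

definition dD :: "(real^'n \<Rightarrow> 'b::real_normed_vector) \<Rightarrow> real^'n \<Rightarrow> real^'n \<Rightarrow> 'b" where
  "dD F p v = frechet_derivative F (at p) v"

text \<open>Christoffel symbols of the Levi-Civita connection of G:
  Gamma(v,w)^k = 1/2 g^{kl} (\<partial>_v g_{wl} + \<partial>_w g_{vl} - \<partial>_l g(v,w))\<close>
definition christoffel :: "(real^'n \<Rightarrow> real^'n^'n) \<Rightarrow> real^'n \<Rightarrow> real^'n \<Rightarrow> real^'n \<Rightarrow> real^'n" where
  "christoffel G p v w = (1/2) *\<^sub>R (matrix_inv (G p) *v
     (\<chi> l. (dD G p v *v w) $ l + (dD G p w *v v) $ l - v \<bullet> (dD G p (axis l 1) *v w)))"

definition nablaV :: "(real^'n \<Rightarrow> real^'n^'n) \<Rightarrow> (real^'n \<Rightarrow> real^'n) \<Rightarrow> real^'n \<Rightarrow> real^'n \<Rightarrow> real^'n" where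
  "nablaV G Y p v = dD Y p v + christoffel G p v (Y p)"

text \<open>(\<nabla>_v T) w at p for a (1,1)-tensor field T: \<nabla>_v (T W) - T (\<nabla>_v W)\<close>
definition nablaT :: "(real^'n \<Rightarrow> real^'n^'n) \<Rightarrow> (real^'n \<Rightarrow> real^'n^'n) \<Rightarrow> real^'n \<Rightarrow> real^'n \<Rightarrow> real^'n \<Rightarrow> real^'n" where
  "nablaT G T p v w = (dD T p v *v w) + christoffel G p v (T p *v w) - T p *v christoffel G p v w"

definition riemannian_metric :: "(real^'n) set \<Rightarrow> (real^'n \<Rightarrow> real^'n^'n) \<Rightarrow> bool" where
  "riemannian_metric U G \<longleftrightarrow> open U \<and> smooth_on U G \<and>
     (\<forall>p\<in>U. transpose (G p) = G p \<and> (\<forall>v. v \<noteq> 0 \<longrightarrow> v \<bullet> (G p *v v) > 0))"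

definition gm :: "(real^'n \<Rightarrow> real^'n^'n) \<Rightarrow> real^'n \<Rightarrow> real^'n \<Rightarrow> real^'n \<Rightarrow> real" where
  "gm G p v w = v \<bullet> (G p *v w)"

definition weak_almost_contact_metric ::
  "nat \<Rightarrow> (real^'n) set \<Rightarrow> (real^'n \<Rightarrow> real^'n^'n) \<Rightarrow> (real^'n \<Rightarrow> real^'n^'n) \<Rightarrow> (real^'n \<Rightarrow> real^'n)
     \<Rightarrow> (real^'n \<Rightarrow> real^'n) \<Rightarrow> (real^'n \<Rightarrow> real^'n^'n) \<Rightarrow> bool" where
  "weak_almost_contact_metric n U F Q xi eta G \<longleftrightarrow>
     CARD('n) = 2 * n + 1 \<and> riemannian_metric U G \<and>
     smooth_on U F \<and> smooth_on U Q \<and> smooth_on U xi \<and> smooth_on U eta \<and>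
     (\<forall>p\<in>U. rank (F p) = 2 * n \<and> invertible (Q p) \<and>
        (\<forall>v. F p *v (F p *v v) = - (Q p *v v) + (eta p \<bullet> v) *\<^sub>R xi p) \<and>
        eta p \<bullet> xi p = 1 \<and> Q p *v xi p = xi p \<and>
        (\<forall>v. eta p \<bullet> v = 0 \<longrightarrow> eta p \<bullet> (F p *v v) = 0) \<and>
        (\<forall>v w. gm G p (F p *v v) (F p *v w) = gm G p v (Q p *v w) - (eta p \<bullet> v) * (eta p \<bullet> w)))"

definition weak_nearly_sasakian ::
  "nat \<Rightarrow> (real^'n) set \<Rightarrow> (real^'n \<Rightarrow> real^'n^'n) \<Rightarrow> (real^'n \<Rightarrow> real^'n^'n) \<Rightarrow> (real^'n \<Rightarrow> real^'n)
     \<Rightarrow> (real^'n \<Rightarrow> real^'n) \<Rightarrow> (real^'n \<Rightarrow> real^'n^'n) \<Rightarrow> bool" where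
  "weak_nearly_sasakian n U F Q xi eta G \<longleftrightarrow> weak_almost_contact_metric n U F Q xi eta G \<and>
     (\<forall>p\<in>U. \<forall>v w. nablaT G F p v w + nablaT G F p w v
        = (2 * gm G p v w) *\<^sub>R xi p - (eta p \<bullet> w) *\<^sub>R v - (eta p \<bullet> v) *\<^sub>R w)"

definition sasakian ::
  "nat \<Rightarrow> (real^'n) set \<Rightarrow> (real^'n \<Rightarrow> real^'n^'n) \<Rightarrow> (real^'n \<Rightarrow> real^'n^'n) \<Rightarrow> (real^'n \<Rightarrow> real^'n)
     \<Rightarrow> (real^'n \<Rightarrow> real^'n) \<Rightarrow> (real^'n \<Rightarrow> real^'n^'n) \<Rightarrow> bool" where
  "sasakian n U F Q xi eta G \<longleftrightarrow> weak_almost_contact_metric n U F Q xi eta G \<and>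
     (\<forall>p\<in>U. Q p = mat 1 \<and>
        (\<forall>v w. nablaT G F p v w = (gm G p v w) *\<^sub>R xi p - (eta p \<bullet> w) *\<^sub>R v))"

end

theory Submission
  imports Defs
begin

text \<open>If \<open>h = 0\<close>, i.e. \<open>\<nabla>\<xi> = -f\<close>, then the 1-form \<open>\<eta> = g(\<xi>, \<cdot>)\<close> satisfies
  \<open>d\<eta> = 2\<Phi>\<close> for the fundamental form \<open>\<Phi>(X, Y) = g(X, fY)\<close>, so \<open>\<Phi>\<close> is closed because
  second derivatives of \<open>\<eta>\<close> are symmetric. The tensor \<open>g(Y, (\<nabla>\<^sub>X f)Z)\<close> is skew in \<open>Y, Z\<close>,
  its cyclic sum vanishes since \<open>d\<Phi> = 0\<close> and \<open>\<nabla>\<close> is torsion free, and its symmetrisation in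
  \<open>X, Z\<close> is prescribed by the nearly Sasakian condition; these three facts determine it and give
  the Sasakian identity \<open>(\<nabla>\<^sub>X f)Y = g(X, Y)\<xi> - \<eta>(Y)X\<close>. Putting \<open>Y = \<xi>\<close> and using
  \<open>f\<xi> = 0\<close> gives \<open>f\<^sup>2 = \<eta> \<otimes> \<xi> - id\<close>, hence \<open>Q = id\<close>. Conversely, the Sasakian identity
  with \<open>Y = \<xi>\<close> gives \<open>f(\<nabla>\<xi>) = id - \<eta> \<otimes> \<xi>\<close>, and applying \<open>f\<close> once more yields
  \<open>\<nabla>\<xi> = -f\<close>.\<close>

lemma bounded_bilinear_matrix_vector_mult:
  "bounded_bilinear (\<lambda>(A::real^'n^'m) (x::real^'n). A *v x)"
proof -
  have "bilinear (\<lambda>(A::real^'n^'m) (x::real^'n). A *v x)"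
    unfolding bilinear_def
    by (auto intro!: linearI simp: matrix_vector_right_distrib matrix_vector_mult_add_rdistrib
        matrix_vector_mult_scaleR scaleR_matrix_vector_assoc)
  thus ?thesis by (simp add: bilinear_conv_bounded_bilinear)
qed

lemma linear_matrix_vector_mult_left: "linear (\<lambda>A::real^'n^'m. A *v x)"
  using bounded_bilinear.bounded_linear_left[OF bounded_bilinear_matrix_vector_mult]
  by (rule bounded_linear.linear)

lemma has_derivative_matrix_vector_mult:
  "(A has_derivative A') (at p) \<Longrightarrow> (X has_derivative X') (at p) \<Longrightarrow>
   ((\<lambda>q. (A q :: real^'n^'m) *v (X q :: real^'n)) has_derivative (\<lambda>h. A p *v X' h + A' h *v X p)) (at p)"
  using bounded_bilinear.FDERIV[OF bounded_bilinear_matrix_vector_mult] by blast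

lemma has_derivative_matrix_vector_mult_const:
  "(A has_derivative A') (at p) \<Longrightarrow>
   ((\<lambda>q. (A q :: real^'n^'m) *v (x :: real^'n)) has_derivative (\<lambda>h. A' h *v x)) (at p)"
  using has_derivative_matrix_vector_mult[of A A' p "\<lambda>q. x" "\<lambda>h. 0"] by simp

lemma linear_axis_expansion: "linear f \<Longrightarrow> f (v::real^'n) = (\<Sum>l\<in>UNIV. v$l *\<^sub>R f (axis l 1))"
proof -
  assume l: "linear f"
  have "f v = f (\<Sum>l\<in>UNIV. v$l *\<^sub>R axis l 1)"
    using basis_expansion[of v] by (simp add: scalar_mult_eq_scaleR)
  also have "\<dots> = (\<Sum>l\<in>UNIV. v$l *\<^sub>R f (axis l 1))"
    by (simp add: linear_sum[OF l] linear_scale[OF l])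
  finally show ?thesis .
qed

lemma smooth_on_differentiable_at:
  assumes "smooth_on U T" "open U" "p \<in> U"
  shows "T differentiable (at p)"
proof -
  have "itpd [] T differentiable_on U" using assms(1) unfolding smooth_on_def by blast
  thus ?thesis using assms by (simp add: differentiable_on_eq_differentiable_at)
qed

lemma smooth_on_partial_differentiable_at:
  assumes "smooth_on U T" "open U" "p \<in> U"
  shows "(\<lambda>q. frechet_derivative T (at q) (axis i 1)) differentiable (at p)"
proof -
  have "itpd [i] T differentiable_on U" using assms(1) unfolding smooth_on_def by blast
  thus ?thesis using assms by (simp add: differentiable_on_eq_differentiable_at)
qed

lemma has_derivative_dD:
  assumes "T differentiable (at p)" shows "(T has_derivative dD T p) (at p)"
proof -
  have "dD T p = frechet_derivative T (at p)" by (rule ext) (simp add: dD_def)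
  thus ?thesis using assms by (simp add: frechet_derivative_works)
qed

lemma linear_dD: "T differentiable (at p) \<Longrightarrow> linear (dD T p)"
  using has_derivative_dD has_derivative_linear by blast

lemma dD_eqI: "(T has_derivative T') (at p) \<Longrightarrow> dD T p v = T' v"
  using frechet_derivative_at[of T T' p] by (simp add: dD_def)

lemma dD_const: "dD (\<lambda>q. c) p v = 0"
  using dD_eqI[OF has_derivative_const] by blast

lemma dD_transform_within_open:
  "T differentiable (at p) \<Longrightarrow> open U \<Longrightarrow> p \<in> U \<Longrightarrow> (\<And>q. q \<in> U \<Longrightarrow> T q = S q) \<Longrightarrow>
   dD S p v = dD T p v"
  using frechet_derivative_transform_within_open[of T p U S] by (simp add: dD_def)

section \<open>Symmetry of second derivatives\<close>

lemma second_difference_mean_value: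
  fixes \<phi> :: "'a::real_normed_vector \<Rightarrow> real"
  assumes deriv: "\<And>x. x \<in> U \<Longrightarrow> (\<phi> has_derivative \<phi>' x) (at x)"
    and t: "0 < t"
    and segments: "\<And>s. 0 \<le> s \<Longrightarrow> s \<le> t \<Longrightarrow> p + t *\<^sub>R u + s *\<^sub>R v \<in> U \<and> p + s *\<^sub>R v \<in> U"
  obtains z where "0 < z" "z < t"
    "\<phi> (p + t *\<^sub>R u + t *\<^sub>R v) - \<phi> (p + t *\<^sub>R u) - \<phi> (p + t *\<^sub>R v) + \<phi> p
       = t * (\<phi>' (p + t *\<^sub>R u + z *\<^sub>R v) v - \<phi>' (p + z *\<^sub>R v) v)"
proof -
  have line: "((\<lambda>s. \<phi> (a + s *\<^sub>R v)) has_real_derivative \<phi>' (a + s *\<^sub>R v) v) (at s)"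
    if "a + s *\<^sub>R v \<in> U" for a s
  proof -
    have "((\<lambda>s. a + s *\<^sub>R v) has_derivative (\<lambda>h. h *\<^sub>R v)) (at s)"
      by (auto intro!: derivative_eq_intros)
    from has_derivative_compose[OF this deriv[OF that]]
    have "((\<lambda>s. \<phi> (a + s *\<^sub>R v)) has_derivative (\<lambda>h. \<phi>' (a + s *\<^sub>R v) (h *\<^sub>R v))) (at s)"
      by (simp add: o_def)
    moreover have "(\<lambda>h. \<phi>' (a + s *\<^sub>R v) (h *\<^sub>R v)) = (*) (\<phi>' (a + s *\<^sub>R v) v)"
      using linear_scale[OF has_derivative_linear[OF deriv[OF that]]] by (auto simp: mult.commute)
    ultimately show ?thesis by (simp add: has_field_derivative_def)
  qed
  define g where "g s = \<phi> (p + t *\<^sub>R u + s *\<^sub>R v) - \<phi> (p + s *\<^sub>R v)" for s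
  define g' where "g' s = \<phi>' (p + t *\<^sub>R u + s *\<^sub>R v) v - \<phi>' (p + s *\<^sub>R v) v" for s
  have "(g has_real_derivative g' s) (at s)" if "0 \<le> s" "s \<le> t" for s
    unfolding g_def g'_def using segments[OF that] by (intro DERIV_diff line) auto
  then obtain z where "0 < z" "z < t" "g t - g 0 = (t - 0) * g' z"
    using MVT2[OF t, of g g'] by blast
  thus thesis by (intro that) (auto simp: g_def g'_def)
qed

lemma second_difference_bound:
  fixes \<phi> :: "'a::real_normed_vector \<Rightarrow> real"
  assumes deriv: "\<And>x. x \<in> U \<Longrightarrow> (\<phi> has_derivative \<phi>' x) (at x)"
    and L: "linear L" and t: "0 < t" and c: "0 \<le> c" and C: "norm u + norm v \<le> C"
    and inU: "\<And>y. norm y \<le> t * C \<Longrightarrow> p + y \<in> U"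
    and approx: "\<And>y. norm y \<le> t * C \<Longrightarrow> \<bar>\<phi>' (p + y) v - \<phi>' p v - L y\<bar> \<le> c * norm y"
  shows "\<bar>\<phi> (p + t *\<^sub>R u + t *\<^sub>R v) - \<phi> (p + t *\<^sub>R u) - \<phi> (p + t *\<^sub>R v) + \<phi> p - t\<^sup>2 * L u\<bar>
    \<le> 2 * c * C * t\<^sup>2"
proof -
  have small: "norm (t *\<^sub>R u + s *\<^sub>R v) \<le> t * C" "norm (s *\<^sub>R v) \<le> t * C"
    if "0 \<le> s" "s \<le> t" for s
  proof -
    have "norm (t *\<^sub>R u + s *\<^sub>R v) \<le> t * norm u + s * norm v"
      using that t norm_triangle_ineq[of "t *\<^sub>R u" "s *\<^sub>R v"] by simp
    also have "\<dots> \<le> t * (norm u + norm v)" using that by (simp add: mult_right_mono algebra_simps)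
    also have "\<dots> \<le> t * C" using C t by (simp add: mult_left_mono)
    finally show "norm (t *\<^sub>R u + s *\<^sub>R v) \<le> t * C" .
    have "norm (s *\<^sub>R v) \<le> t * norm v" using that by (simp add: mult_right_mono)
    also have "\<dots> \<le> t * C" using C t norm_ge_zero[of u] by (intro mult_left_mono) linarith+
    finally show "norm (s *\<^sub>R v) \<le> t * C" .
  qed
  have "p + t *\<^sub>R u + s *\<^sub>R v \<in> U \<and> p + s *\<^sub>R v \<in> U" if "0 \<le> s" "s \<le> t" for s
    using inU[OF small(1)[OF that]] inU[OF small(2)[OF that]] by (simp add: add.assoc)
  then obtain z where z: "0 < z" "z < t" and mv:
    "\<phi> (p + t *\<^sub>R u + t *\<^sub>R v) - \<phi> (p + t *\<^sub>R u) - \<phi> (p + t *\<^sub>R v) + \<phi> p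
       = t * (\<phi>' (p + t *\<^sub>R u + z *\<^sub>R v) v - \<phi>' (p + z *\<^sub>R v) v)"
    using second_difference_mean_value[OF deriv t] by blast
  define y1 where "y1 = t *\<^sub>R u + z *\<^sub>R v"
  define y2 where "y2 = z *\<^sub>R v"
  have y: "norm y1 \<le> t * C" "norm y2 \<le> t * C" using small z by (auto simp: y1_def y2_def)
  have "\<phi>' (p + t *\<^sub>R u + z *\<^sub>R v) v - \<phi>' (p + z *\<^sub>R v) v - t * L u
      = (\<phi>' (p + y1) v - \<phi>' p v - L y1) - (\<phi>' (p + y2) v - \<phi>' p v - L y2)"
    by (simp add: y1_def y2_def linear_add[OF L] linear_scale[OF L] add.assoc)
  also have "\<bar>\<dots>\<bar> \<le> c * norm y1 + c * norm y2"
    using approx[OF y(1)] approx[OF y(2)] by simp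
  also have "\<dots> \<le> c * (t * C) + c * (t * C)"
    using y c by (intro add_mono mult_left_mono) auto
  finally have "\<bar>\<phi>' (p + t *\<^sub>R u + z *\<^sub>R v) v - \<phi>' (p + z *\<^sub>R v) v - t * L u\<bar> \<le> 2 * c * C * t"
    by (simp add: algebra_simps)
  hence "\<bar>t * (\<phi>' (p + t *\<^sub>R u + z *\<^sub>R v) v - \<phi>' (p + z *\<^sub>R v) v - t * L u)\<bar>
      \<le> t * (2 * c * C * t)"
    using t by (simp add: abs_mult)
  thus ?thesis unfolding mv by (simp add: power2_eq_square algebra_simps)
qed

lemma second_difference_approx:
  fixes \<phi> :: "'a::real_normed_vector \<Rightarrow> real"
  assumes U: "open U" "p \<in> U"
    and deriv: "\<And>x. x \<in> U \<Longrightarrow> (\<phi> has_derivative \<phi>' x) (at x)"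
    and deriv2: "((\<lambda>x. \<phi>' x v) has_derivative L) (at p)"
    and e: "e > 0"
  shows "\<exists>d>0. \<forall>t. 0 < t \<and> t < d \<longrightarrow>
     \<bar>\<phi> (p + t *\<^sub>R u + t *\<^sub>R v) - \<phi> (p + t *\<^sub>R u) - \<phi> (p + t *\<^sub>R v) + \<phi> p - t\<^sup>2 * L u\<bar> \<le> e * t\<^sup>2"
proof -
  define C where "C = norm u + norm v + 1"
  have C: "C > 0" "norm u + norm v \<le> C" unfolding C_def by (simp_all add: add_nonneg_pos)
  define c where "c = e / (2 * C)"
  have c: "c > 0" "2 * c * C = e" using e C by (simp_all add: c_def)
  obtain r where r: "r > 0" "ball p r \<subseteq> U" using U open_contains_ball by blast
  obtain \<delta> where \<delta>: "\<delta> > 0" "\<And>y. norm (y - p) < \<delta> \<Longrightarrow>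
      norm (\<phi>' y v - \<phi>' p v - L (y - p)) \<le> c * norm (y - p)"
    using deriv2 c(1) unfolding has_derivative_at_alt by blast
  have "\<bar>\<phi> (p + t *\<^sub>R u + t *\<^sub>R v) - \<phi> (p + t *\<^sub>R u) - \<phi> (p + t *\<^sub>R v) + \<phi> p - t\<^sup>2 * L u\<bar>
      \<le> e * t\<^sup>2" if t: "0 < t" "t < min \<delta> r / C" for t
  proof -
    have tC: "t * C < min \<delta> r" using t C by (simp add: pos_less_divide_eq)
    have L: "linear L" using deriv2 has_derivative_linear by blast
    have inU: "p + y \<in> U" if "norm y \<le> t * C" for y
      using that tC r by (auto simp: dist_norm intro!: subsetD[OF r(2)])
    have approx: "\<bar>\<phi>' (p + y) v - \<phi>' p v - L y\<bar> \<le> c * norm y" if "norm y \<le> t * C" for y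
      using \<delta>(2)[of "p + y"] that tC by simp
    show ?thesis
      using second_difference_bound[where U = U and p = p, OF deriv L t(1) less_imp_le[OF c(1)] C(2)
          inU approx] c(2) by simp
  qed
  moreover have "min \<delta> r / C > 0" using \<delta> r C by simp
  ultimately show ?thesis by blast
qed

text \<open>Only differentiability of the first derivative at \<open>p\<close> is assumed (Peano's form of
  Schwarz's theorem); the second differences are estimated in both orders.\<close>

lemma second_derivative_symmetric:
  fixes \<phi> :: "'a::real_normed_vector \<Rightarrow> real"
  assumes U: "open U" "p \<in> U"
    and deriv: "\<And>x. x \<in> U \<Longrightarrow> (\<phi> has_derivative \<phi>' x) (at x)"
    and deriv2: "\<And>v. ((\<lambda>x. \<phi>' x v) has_derivative L v) (at p)"
  shows "L v u = L u v"
proof (rule ccontr)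
  assume ne: "L v u \<noteq> L u v"
  define e where "e = \<bar>L v u - L u v\<bar> / 3"
  have e: "e > 0" using ne by (simp add: e_def)
  obtain da where da: "da > 0" "\<And>t. 0 < t \<and> t < da \<Longrightarrow>
     \<bar>\<phi> (p + t *\<^sub>R u + t *\<^sub>R v) - \<phi> (p + t *\<^sub>R u) - \<phi> (p + t *\<^sub>R v) + \<phi> p - t\<^sup>2 * L v u\<bar> \<le> e * t\<^sup>2"
    using second_difference_approx[OF U deriv deriv2 e] by blast
  obtain db where db: "db > 0" "\<And>t. 0 < t \<and> t < db \<Longrightarrow>
     \<bar>\<phi> (p + t *\<^sub>R v + t *\<^sub>R u) - \<phi> (p + t *\<^sub>R v) - \<phi> (p + t *\<^sub>R u) + \<phi> p - t\<^sup>2 * L u v\<bar> \<le> e * t\<^sup>2"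
    using second_difference_approx[OF U deriv deriv2 e] by blast
  define t where "t = min da db / 2"
  have t: "0 < t \<and> t < da" "0 < t \<and> t < db" using da db by (auto simp: t_def)
  have swap: "p + t *\<^sub>R v + t *\<^sub>R u = p + t *\<^sub>R u + t *\<^sub>R v" by (simp add: algebra_simps)
  have "\<bar>t\<^sup>2 * L v u - t\<^sup>2 * L u v\<bar> \<le> 2 * e * t\<^sup>2"
    using da(2)[OF t(1)] db(2)[OF t(2)] unfolding swap by linarith
  then have "\<bar>t\<^sup>2 * (L v u - L u v)\<bar> \<le> t\<^sup>2 * (2 * e)" by (simp add: right_diff_distrib mult.commute)
  hence "\<bar>L v u - L u v\<bar> \<le> 2 * e" using t by (simp add: abs_mult)
  thus False using e by (simp add: e_def)
qed

section \<open>The Levi-Civita connection in a chart\<close>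

locale riemannian_chart =
  fixes U :: "(real^'n) set" and G :: "real^'n \<Rightarrow> real^'n^'n"
  assumes riemannian: "riemannian_metric U G"
begin

lemma open_U: "open U"
  using riemannian by (simp add: riemannian_metric_def)

lemma transpose_G: "p \<in> U \<Longrightarrow> transpose (G p) = G p"
  using riemannian by (simp add: riemannian_metric_def)

lemma metric_pos: "p \<in> U \<Longrightarrow> v \<noteq> 0 \<Longrightarrow> v \<bullet> (G p *v v) > 0"
  using riemannian by (simp add: riemannian_metric_def)

lemma metric_sym: "p \<in> U \<Longrightarrow> v \<bullet> (G p *v w) = w \<bullet> (G p *v v)"
  by (metis transpose_G dot_lmul_matrix inner_commute transpose_matrix_vector)

lemma metric_self_eq_0_iff: "p \<in> U \<Longrightarrow> x \<bullet> (G p *v x) = 0 \<longleftrightarrow> x = 0"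
  using metric_pos[of p x] by (cases "x = 0") auto

lemma differentiable_G: "p \<in> U \<Longrightarrow> G differentiable (at p)"
  using riemannian open_U smooth_on_differentiable_at by (auto simp: riemannian_metric_def)

lemma G_matrix_inv_right: assumes p: "p \<in> U" shows "G p ** matrix_inv (G p) = mat 1"
proof -
  have "\<forall>x. G p *v x = 0 \<longrightarrow> x = 0" using metric_self_eq_0_iff[OF p] by (metis inner_zero_right)
  hence "invertible (G p)" using invertible_left_inverse matrix_left_invertible_ker by blast
  then have "\<exists>A'. G p ** A' = mat 1 \<and> A' ** G p = mat 1" by (simp add: invertible_def)
  hence "G p ** matrix_inv (G p) = mat 1 \<and> matrix_inv (G p) ** G p = mat 1"
    unfolding matrix_inv_def by (rule someI_ex)
  thus ?thesis by simp
qed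

lemma has_derivative_metric:
  "p \<in> U \<Longrightarrow> ((\<lambda>q. x \<bullet> (G q *v z)) has_derivative (\<lambda>h. x \<bullet> (dD G p h *v z))) (at p)"
  using has_derivative_inner_right[OF has_derivative_matrix_vector_mult_const[OF
      has_derivative_dD[OF differentiable_G]]] by blast

lemma dD_metric_sym: assumes p: "p \<in> U" shows "x \<bullet> (dD G p y *v z) = z \<bullet> (dD G p y *v x)"
proof -
  have "dD (\<lambda>q. x \<bullet> (G q *v z)) p y = dD (\<lambda>q. z \<bullet> (G q *v x)) p y"
    by (rule dD_transform_within_open[OF _ open_U p])
      (auto intro: differentiableI has_derivative_metric[OF p] metric_sym)
  thus ?thesis using dD_eqI[OF has_derivative_metric[OF p]] by simp
qed

lemma metric_christoffel: assumes p: "p \<in> U"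
  shows "v \<bullet> (G p *v christoffel G p u x) =
     (1/2) * (v \<bullet> (dD G p u *v x) + v \<bullet> (dD G p x *v u) - u \<bullet> (dD G p v *v x))"
proof -
  define s where "s = (\<chi> l. (dD G p u *v x) $ l + (dD G p x *v u) $ l - u \<bullet> (dD G p (axis l 1) *v x))"
  have "G p *v christoffel G p u x = (1/2) *\<^sub>R s"
    unfolding christoffel_def s_def
    by (simp add: matrix_vector_mult_scaleR matrix_vector_mul_assoc G_matrix_inv_right[OF p])
  moreover have "(\<Sum>l\<in>UNIV. v$l * (u \<bullet> (dD G p (axis l 1) *v x))) = u \<bullet> (dD G p v *v x)"
  proof -
    have "dD G p v = (\<Sum>l\<in>UNIV. v$l *\<^sub>R dD G p (axis l 1))"
      by (rule linear_axis_expansion[OF linear_dD[OF differentiable_G[OF p]]])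
    hence "dD G p v *v x = (\<Sum>l\<in>UNIV. v$l *\<^sub>R (dD G p (axis l 1) *v x))"
      by (simp add: linear_sum[OF linear_matrix_vector_mult_left]
          linear_scale[OF linear_matrix_vector_mult_left] o_def)
    thus ?thesis by (simp add: inner_sum_right)
  qed
  moreover have "v \<bullet> s = v \<bullet> (dD G p u *v x) + v \<bullet> (dD G p x *v u)
      - (\<Sum>l\<in>UNIV. v$l * (u \<bullet> (dD G p (axis l 1) *v x)))"
    unfolding s_def inner_vec_def by (simp add: algebra_simps sum.distrib sum_subtractf)
  ultimately show ?thesis by simp
qed

lemma metric_compatible: assumes p: "p \<in> U"
  shows "v \<bullet> (dD G p u *v x) = v \<bullet> (G p *v christoffel G p u x) + x \<bullet> (G p *v christoffel G p u v)"
  using metric_christoffel[OF p, of v u x] metric_christoffel[OF p, of x u v]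
    dD_metric_sym[OF p, of x u v] dD_metric_sym[OF p, of x v u] dD_metric_sym[OF p, of v x u]
  by (simp add: algebra_simps)

lemma christoffel_sym: assumes p: "p \<in> U" shows "christoffel G p u x = christoffel G p x u"
proof -
  have "(\<chi> l. (dD G p u *v x) $ l + (dD G p x *v u) $ l - u \<bullet> (dD G p (axis l 1) *v x)) =
        (\<chi> l. (dD G p x *v u) $ l + (dD G p u *v x) $ l - x \<bullet> (dD G p (axis l 1) *v u))"
    by (rule arg_cong[where f=vec_lambda], rule ext) (simp add: dD_metric_sym[OF p, of u _ x])
  thus ?thesis unfolding christoffel_def by simp
qed

lemma christoffel_zero_right: assumes p: "p \<in> U" shows "christoffel G p u 0 = 0"
proof -
  have "dD G p 0 = 0" using linear_0[OF linear_dD[OF differentiable_G[OF p]]] .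
  moreover have "(\<chi> l. (0::real)) = (0::real^'n)" by (simp add: vec_eq_iff)
  ultimately show ?thesis unfolding christoffel_def by simp
qed

end

section \<open>Weak almost contact metric structures\<close>

locale weak_acm_structure =
  fixes n :: nat and U :: "(real^'n) set"
    and F Q :: "real^'n \<Rightarrow> real^'n^'n" and xi eta :: "real^'n \<Rightarrow> real^'n"
    and G :: "real^'n \<Rightarrow> real^'n^'n"
  assumes wacm: "weak_almost_contact_metric n U F Q xi eta G"

sublocale weak_acm_structure \<subseteq> riemannian_chart U G
  using wacm by unfold_locales (simp add: weak_almost_contact_metric_def)

context weak_acm_structure
begin

lemma CARD_eq: "CARD('n) = 2 * n + 1"
  using wacm by (simp add: weak_almost_contact_metric_def)

lemma rank_F: "p \<in> U \<Longrightarrow> rank (F p) = 2 * n"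
  using wacm by (simp add: weak_almost_contact_metric_def)

lemma invertible_Q: "p \<in> U \<Longrightarrow> invertible (Q p)"
  using wacm by (simp add: weak_almost_contact_metric_def)

lemma F_F: "p \<in> U \<Longrightarrow> F p *v (F p *v v) = - (Q p *v v) + (eta p \<bullet> v) *\<^sub>R xi p"
  using wacm by (simp add: weak_almost_contact_metric_def)

lemma eta_xi: "p \<in> U \<Longrightarrow> eta p \<bullet> xi p = 1"
  using wacm by (simp add: weak_almost_contact_metric_def)

lemma Q_xi: "p \<in> U \<Longrightarrow> Q p *v xi p = xi p"
  using wacm by (simp add: weak_almost_contact_metric_def)

lemma eta_F_of_ker: "p \<in> U \<Longrightarrow> eta p \<bullet> v = 0 \<Longrightarrow> eta p \<bullet> (F p *v v) = 0"
  using wacm by (simp add: weak_almost_contact_metric_def)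

lemma metric_F_F:
  "p \<in> U \<Longrightarrow> (F p *v v) \<bullet> (G p *v (F p *v w)) = v \<bullet> (G p *v (Q p *v w)) - (eta p \<bullet> v) * (eta p \<bullet> w)"
  using wacm by (simp add: weak_almost_contact_metric_def gm_def)

lemma differentiable_F: "p \<in> U \<Longrightarrow> F differentiable (at p)"
  using wacm open_U smooth_on_differentiable_at by (auto simp: weak_almost_contact_metric_def)

lemma differentiable_xi: "p \<in> U \<Longrightarrow> xi differentiable (at p)"
  using wacm open_U smooth_on_differentiable_at by (auto simp: weak_almost_contact_metric_def)

lemma differentiable_eta: "p \<in> U \<Longrightarrow> eta differentiable (at p)"
  using wacm open_U smooth_on_differentiable_at by (auto simp: weak_almost_contact_metric_def)

lemma differentiable_partial_eta:
  "p \<in> U \<Longrightarrow> (\<lambda>q. frechet_derivative eta (at q) (axis i 1)) differentiable (at p)"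
  using wacm open_U smooth_on_partial_differentiable_at by (auto simp: weak_almost_contact_metric_def)

lemma inj_on_F_ker_eta: assumes p: "p \<in> U" shows "inj_on ((*v) (F p)) {x. eta p \<bullet> x = 0}"
proof (rule inj_onI)
  fix x y assume x: "x \<in> {x. eta p \<bullet> x = 0}" and y: "y \<in> {x. eta p \<bullet> x = 0}"
    and e: "F p *v x = F p *v y"
  have "F p *v (F p *v (x - y)) = 0" using e by (simp add: matrix_vector_mult_diff_distrib)
  moreover have "eta p \<bullet> (x - y) = 0" using x y by (simp add: inner_diff_right)
  ultimately have "Q p *v (x - y) = Q p *v 0" using F_F[OF p, of "x - y"] by simp
  hence "x - y = 0" using inj_matrix_vector_mult[OF invertible_Q[OF p]] by (meson injD)
  thus "x = y" by simp
qed

text \<open>\<open>F p\<close> is injective on the hyperplane \<open>ker \<eta>\<close> and maps it into itself, so it maps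
  it onto itself; since \<open>rank (F p) = 2n = dim (ker \<eta>)\<close>, this is the whole range.\<close>

lemma range_F: assumes p: "p \<in> U" shows "range ((*v) (F p)) = {x. eta p \<bullet> x = 0}"
proof -
  let ?K = "{x. eta p \<bullet> x = 0}" and ?f = "(*v) (F p)"
  have "eta p \<noteq> 0" using eta_xi[OF p] by auto
  hence dimK: "dim ?K = 2 * n" using dim_hyperplane[of "eta p"] CARD_eq by simp
  have lin: "linear ?f" by (rule matrix_vector_mul_linear)
  have subK: "subspace ?K" by (rule subspace_hyperplane)
  hence "span ?K = ?K" by (simp add: span_eq_iff)
  hence "inj_on ?f (span ?K)" using inj_on_F_ker_eta[OF p] by (simp only:)
  hence dimFK: "dim (?f ` ?K) = 2 * n" using dim_image_eq[OF lin] dimK by simp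
  have subFK: "subspace (?f ` ?K)" using linear_subspace_image[OF lin subK] .
  have "?f ` ?K \<subseteq> ?K" using eta_F_of_ker[OF p] by auto
  hence "?f ` ?K = ?K" using subspace_dim_equal[OF subFK subK] dimFK dimK by simp
  moreover have "?f ` ?K = range ?f"
    using subspace_dim_equal[OF subFK linear_subspace_image[OF lin subspace_UNIV]]
      rank_dim_range[of "F p"] rank_F[OF p] dimFK by auto
  ultimately show ?thesis by simp
qed

lemma eta_F: "p \<in> U \<Longrightarrow> eta p \<bullet> (F p *v v) = 0"
  using range_F by blast

lemma F_xi: assumes p: "p \<in> U" shows "F p *v xi p = 0"
proof -
  have "F p *v (F p *v xi p) = F p *v 0"
    using F_F[OF p, of "xi p"] Q_xi[OF p] eta_xi[OF p] by simp
  thus ?thesis using inj_onD[OF inj_on_F_ker_eta[OF p]] eta_F[OF p] by simp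
qed

lemma eta_eq_metric_xi: assumes p: "p \<in> U" shows "eta p \<bullet> v = v \<bullet> (G p *v xi p)"
  using metric_F_F[OF p, of v "xi p"] F_xi[OF p] Q_xi[OF p] eta_xi[OF p] by simp

text \<open>Write \<open>w = F z + \<eta>(w) \<xi>\<close> by \<open>range_F\<close>; then both sides reduce to \<open>-g(F v, F z)\<close>.\<close>

lemma metric_F_skew: assumes p: "p \<in> U"
  shows "v \<bullet> (G p *v (F p *v w)) = - ((F p *v v) \<bullet> (G p *v w))"
proof -
  define c where "c = eta p \<bullet> w"
  have "eta p \<bullet> (w - c *\<^sub>R xi p) = 0" using eta_xi[OF p] by (simp add: c_def inner_diff_right)
  hence "w - c *\<^sub>R xi p \<in> range ((*v) (F p))" using range_F[OF p] by simp
  then obtain z where "F p *v z = w - c *\<^sub>R xi p" by (elim rangeE) simp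
  hence w: "w = F p *v z + c *\<^sub>R xi p" by simp
  have "v \<bullet> (G p *v (F p *v w)) = v \<bullet> (G p *v (F p *v (F p *v z)))" using F_xi[OF p]
    by (simp add: w matrix_vector_right_distrib matrix_vector_mult_scaleR)
  also have "\<dots> = - (v \<bullet> (G p *v (Q p *v z))) + (eta p \<bullet> z) * (eta p \<bullet> v)"
    using F_F[OF p, of z] eta_eq_metric_xi[OF p, of v]
    by (simp add: matrix_vector_right_distrib matrix_vector_mult_scaleR inner_add_right
        inner_minus_right vec.neg vec.scale vec.diff inner_diff_right)
  also have "\<dots> = - ((F p *v v) \<bullet> (G p *v (F p *v z)))" using metric_F_F[OF p, of v z] by simp
  also have "\<dots> = - ((F p *v v) \<bullet> (G p *v w))"
    using eta_eq_metric_xi[OF p, of "F p *v v"] eta_F[OF p]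
    by (simp add: w matrix_vector_right_distrib matrix_vector_mult_scaleR inner_add_right)
  finally show ?thesis .
qed

lemma nablaT_F_xi: assumes p: "p \<in> U"
  shows "nablaT G F p X (xi p) = - (F p *v nablaV G xi p X)"
proof -
  have d: "((\<lambda>q. F q *v xi q) has_derivative (\<lambda>h. F p *v dD xi p h + dD F p h *v xi p)) (at p)"
    using has_derivative_matrix_vector_mult[OF has_derivative_dD[OF differentiable_F[OF p]]
        has_derivative_dD[OF differentiable_xi[OF p]]] .
  have "dD (\<lambda>q. F q *v xi q) p X = dD (\<lambda>q. 0) p X"
    by (rule dD_transform_within_open[OF _ open_U p]) (auto simp: F_xi)
  hence "F p *v dD xi p X + dD F p X *v xi p = 0" using dD_eqI[OF d, of X] dD_const by simp
  thus ?thesis unfolding nablaT_def nablaV_def using F_xi[OF p] christoffel_zero_right[OF p]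
    by (simp add: matrix_vector_right_distrib algebra_simps eq_neg_iff_add_eq_0)
qed

lemma eta_nablaV_xi: assumes p: "p \<in> U" shows "eta p \<bullet> nablaV G xi p X = 0"
proof -
  have d: "((\<lambda>q. xi q \<bullet> (G q *v xi q)) has_derivative
     (\<lambda>h. xi p \<bullet> (G p *v dD xi p h + dD G p h *v xi p) + dD xi p h \<bullet> (G p *v xi p))) (at p)"
    using has_derivative_inner[OF has_derivative_dD[OF differentiable_xi[OF p]]
        has_derivative_matrix_vector_mult[OF has_derivative_dD[OF differentiable_G[OF p]]
          has_derivative_dD[OF differentiable_xi[OF p]]]] .
  have "dD (\<lambda>q. xi q \<bullet> (G q *v xi q)) p X = dD (\<lambda>q. 1) p X"
    by (rule dD_transform_within_open[OF _ open_U p])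
      (auto simp: eta_eq_metric_xi[symmetric] eta_xi)
  hence "xi p \<bullet> (G p *v dD xi p X + dD G p X *v xi p) + dD xi p X \<bullet> (G p *v xi p) = 0"
    using dD_eqI[OF d, of X] dD_const by simp
  moreover have "xi p \<bullet> (G p *v dD xi p X) = dD xi p X \<bullet> (G p *v xi p)" using metric_sym[OF p] .
  moreover have "xi p \<bullet> (dD G p X *v xi p) = 2 * (christoffel G p X (xi p) \<bullet> (G p *v xi p))"
    using metric_compatible[OF p, of "xi p" X "xi p"]
      metric_sym[OF p, of "xi p" "christoffel G p X (xi p)"] by simp
  ultimately have "nablaV G xi p X \<bullet> (G p *v xi p) = 0"
    unfolding nablaV_def by (simp add: inner_add_left inner_add_right matrix_vector_right_distrib)
  thus ?thesis using eta_eq_metric_xi[OF p] by simp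
qed

lemma sasakian_imp_nablaV_xi:
  assumes p: "p \<in> U" and Q: "Q p = mat 1"
    and sasakian: "\<And>v w. nablaT G F p v w = (gm G p v w) *\<^sub>R xi p - (eta p \<bullet> w) *\<^sub>R v"
  shows "nablaV G xi p X = - (F p *v X)"
proof -
  let ?N = "nablaV G xi p X"
  have "nablaT G F p X (xi p) = (eta p \<bullet> X) *\<^sub>R xi p - X"
    using sasakian[of X "xi p"] eta_xi[OF p] eta_eq_metric_xi[OF p, of X] by (simp add: gm_def)
  hence FN: "F p *v ?N = X - (eta p \<bullet> X) *\<^sub>R xi p"
    using nablaT_F_xi[OF p, of X] by (simp add: algebra_simps)
  have "- ?N = F p *v (F p *v ?N)" using F_F[OF p, of ?N] Q eta_nablaV_xi[OF p, of X] by simp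
  also have "\<dots> = F p *v X" using F_xi[OF p]
    by (simp add: FN matrix_vector_mult_diff_distrib matrix_vector_mult_scaleR)
  finally show ?thesis by (metis minus_minus)
qed

section \<open>The covariant derivative of the fundamental form\<close>

definition dPhi :: "real^'n \<Rightarrow> real^'n \<Rightarrow> real^'n \<Rightarrow> real^'n \<Rightarrow> real" where
  "dPhi p u v w = v \<bullet> (dD G p u *v (F p *v w)) + v \<bullet> (G p *v (dD F p u *v w))"

definition nabla_Phi :: "real^'n \<Rightarrow> real^'n \<Rightarrow> real^'n \<Rightarrow> real^'n \<Rightarrow> real" where
  "nabla_Phi p u v w = v \<bullet> (G p *v nablaT G F p u w)"

lemma has_derivative_Phi: assumes p: "p \<in> U"
  shows "((\<lambda>r. v \<bullet> (G r *v (F r *v w))) has_derivative (\<lambda>u. dPhi p u v w)) (at p)"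
proof -
  have "((\<lambda>r. G r *v (F r *v w)) has_derivative
      (\<lambda>u. G p *v (dD F p u *v w) + dD G p u *v (F p *v w))) (at p)"
    using has_derivative_matrix_vector_mult[OF has_derivative_dD[OF differentiable_G[OF p]]
        has_derivative_matrix_vector_mult_const[OF has_derivative_dD[OF differentiable_F[OF p]]]] .
  from has_derivative_inner_right[OF this, of v]
  show ?thesis unfolding dPhi_def by (simp add: inner_add_right algebra_simps)
qed

lemma dPhi_skew: assumes p: "p \<in> U" shows "dPhi p u v w = - dPhi p u w v"
proof -
  have d: "((\<lambda>r. - (w \<bullet> (G r *v (F r *v v)))) has_derivative (\<lambda>u. - dPhi p u w v)) (at p)"
    using has_derivative_minus[OF has_derivative_Phi[OF p]] .
  have "dD (\<lambda>r. v \<bullet> (G r *v (F r *v w))) p u = dD (\<lambda>r. - (w \<bullet> (G r *v (F r *v v)))) p u"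
  proof (rule dD_transform_within_open[OF differentiableI[OF d] open_U p])
    fix r assume r: "r \<in> U"
    show "- (w \<bullet> (G r *v (F r *v v))) = v \<bullet> (G r *v (F r *v w))"
      using metric_F_skew[OF r, of w v] metric_sym[OF r, of "F r *v w" v] by simp
  qed
  thus ?thesis using dD_eqI[OF has_derivative_Phi[OF p]] dD_eqI[OF d] by simp
qed

lemma nabla_Phi_eq_dPhi: assumes p: "p \<in> U"
  shows "nabla_Phi p u v w = dPhi p u v w - (F p *v w) \<bullet> (G p *v christoffel G p u v)
                     + (F p *v v) \<bullet> (G p *v christoffel G p u w)"
  using metric_F_skew[OF p, of v "christoffel G p u w"] metric_compatible[OF p, of v u "F p *v w"]
  unfolding nabla_Phi_def nablaT_def dPhi_def
  by (simp add: matrix_vector_right_distrib vec.diff inner_add_right inner_diff_right)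

lemma nabla_Phi_skew: assumes p: "p \<in> U" shows "nabla_Phi p u v w = - nabla_Phi p u w v"
  using nabla_Phi_eq_dPhi[OF p, of u v w] nabla_Phi_eq_dPhi[OF p, of u w v] dPhi_skew[OF p, of u v w]
  by linarith

text \<open>The Christoffel terms cancel in the cyclic sum because \<open>\<nabla>\<close> is torsion free.\<close>

lemma nabla_Phi_cyclic_sum:
  assumes p: "p \<in> U" and closed: "dPhi p u v w + dPhi p v w u + dPhi p w u v = 0"
  shows "nabla_Phi p u v w + nabla_Phi p v w u + nabla_Phi p w u v = 0"
  using nabla_Phi_eq_dPhi[OF p, of u v w] nabla_Phi_eq_dPhi[OF p, of v w u]
    nabla_Phi_eq_dPhi[OF p, of w u v] closed christoffel_sym[OF p, of v u]
    christoffel_sym[OF p, of w u] christoffel_sym[OF p, of w v]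
  by (simp add: algebra_simps)

lemma nabla_Phi_nearly_sasakian:
  assumes p: "p \<in> U"
    and nearly: "nablaT G F p a c + nablaT G F p c a
        = (2 * gm G p a c) *\<^sub>R xi p - (eta p \<bullet> c) *\<^sub>R a - (eta p \<bullet> a) *\<^sub>R c"
  shows "nabla_Phi p a b c + nabla_Phi p c b a = 2 * (eta p \<bullet> b) * (a \<bullet> (G p *v c))
     - (eta p \<bullet> c) * (b \<bullet> (G p *v a)) - (eta p \<bullet> a) * (b \<bullet> (G p *v c))"
proof -
  have "nabla_Phi p a b c + nabla_Phi p c b a = b \<bullet> (G p *v (nablaT G F p a c + nablaT G F p c a))"
    by (simp add: nabla_Phi_def matrix_vector_right_distrib inner_add_right)
  also have "\<dots> = 2 * (eta p \<bullet> b) * (a \<bullet> (G p *v c))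
     - (eta p \<bullet> c) * (b \<bullet> (G p *v a)) - (eta p \<bullet> a) * (b \<bullet> (G p *v c))"
    using eta_eq_metric_xi[OF p, of b]
    by (simp add: nearly gm_def matrix_vector_mult_diff_distrib matrix_vector_mult_scaleR inner_diff_right)
  finally show ?thesis .
qed

text \<open>A trilinear form skew in its last two arguments with vanishing cyclic sum is determined
  by its symmetrisation in the first and last argument.\<close>

lemma nabla_Phi_formula:
  assumes p: "p \<in> U"
    and nearly: "\<And>a c. nablaT G F p a c + nablaT G F p c a
        = (2 * gm G p a c) *\<^sub>R xi p - (eta p \<bullet> c) *\<^sub>R a - (eta p \<bullet> a) *\<^sub>R c"
    and closed: "\<And>u v w. dPhi p u v w + dPhi p v w u + dPhi p w u v = 0"
  shows "nabla_Phi p u v w = (eta p \<bullet> v) * (u \<bullet> (G p *v w)) - (eta p \<bullet> w) * (u \<bullet> (G p *v v))"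
proof -
  have sym: "v \<bullet> (G p *v u) = u \<bullet> (G p *v v)" "w \<bullet> (G p *v u) = u \<bullet> (G p *v w)"
    "w \<bullet> (G p *v v) = v \<bullet> (G p *v w)" using metric_sym[OF p] by auto
  note sums = nabla_Phi_nearly_sasakian[OF p nearly, of v w u]
    nabla_Phi_nearly_sasakian[OF p nearly, of w u v] nabla_Phi_nearly_sasakian[OF p nearly, of u v w]
  show ?thesis
    using sums[unfolded sym] nabla_Phi_skew[OF p, of u w v] nabla_Phi_skew[OF p, of v u w]
      nabla_Phi_skew[OF p, of w u v] nabla_Phi_skew[OF p, of v w u] nabla_Phi_cyclic_sum[OF p, of u v w, OF closed]
    by linarith
qed

lemma sasakian_identity:
  assumes p: "p \<in> U"
    and nearly: "\<And>a c. nablaT G F p a c + nablaT G F p c a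
        = (2 * gm G p a c) *\<^sub>R xi p - (eta p \<bullet> c) *\<^sub>R a - (eta p \<bullet> a) *\<^sub>R c"
    and closed: "\<And>u v w. dPhi p u v w + dPhi p v w u + dPhi p w u v = 0"
  shows "nablaT G F p u w = (gm G p u w) *\<^sub>R xi p - (eta p \<bullet> w) *\<^sub>R u"
proof -
  define R where "R = nablaT G F p u w - ((gm G p u w) *\<^sub>R xi p - (eta p \<bullet> w) *\<^sub>R u)"
  have "v \<bullet> (G p *v R) = 0" for v
  proof -
    have "v \<bullet> (G p *v R) = nabla_Phi p u v w - (u \<bullet> (G p *v w)) * (eta p \<bullet> v)
        + (eta p \<bullet> w) * (v \<bullet> (G p *v u))"
      unfolding R_def nabla_Phi_def gm_def eta_eq_metric_xi[OF p]
      by (simp add: matrix_vector_mult_diff_distrib matrix_vector_mult_scaleR inner_diff_right)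
    thus ?thesis using nabla_Phi_formula[OF p nearly closed, of u v w] metric_sym[OF p, of v u]
      by (simp add: mult.commute)
  qed
  hence "R = 0" using metric_self_eq_0_iff[OF p] by blast
  thus ?thesis unfolding R_def by simp
qed

lemma sasakian_imp_Q_eq_id:
  assumes p: "p \<in> U" and nabla_xi: "\<And>v. nablaV G xi p v = - (F p *v v)"
    and sasakian: "\<And>u w. nablaT G F p u w = (gm G p u w) *\<^sub>R xi p - (eta p \<bullet> w) *\<^sub>R u"
  shows "Q p = mat 1"
proof -
  have "Q p *v v = v" for v
  proof -
    have "nablaT G F p v (xi p) = (eta p \<bullet> v) *\<^sub>R xi p - v"
      using sasakian[of v "xi p"] eta_xi[OF p] eta_eq_metric_xi[OF p, of v] by (simp add: gm_def)
    moreover have "nablaT G F p v (xi p) = F p *v (F p *v v)"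
      using nablaT_F_xi[OF p, of v] nabla_xi[of v] by (simp add: vec.neg)
    ultimately show ?thesis using F_F[OF p, of v] by (simp add: algebra_simps)
  qed
  thus ?thesis by (simp add: matrix_eq)
qed

end

section \<open>Vanishing of \<open>h\<close> makes the fundamental form closed\<close>

context weak_acm_structure
begin

lemma eta_eq_G_xi: assumes p: "p \<in> U" shows "eta p = G p *v xi p"
proof -
  have "(eta p - G p *v xi p) \<bullet> v = 0" for v
    using eta_eq_metric_xi[OF p, of v] by (simp add: inner_diff_left inner_commute[of v])
  thus ?thesis using inner_eq_zero_iff[of "eta p - G p *v xi p"] by simp
qed

lemma differentiable_dD_eta: assumes p: "p \<in> U" shows "(\<lambda>r. dD eta r v) differentiable (at p)"
proof -
  have "(\<lambda>r. v$i *\<^sub>R frechet_derivative eta (at r) (axis i 1)) differentiable (at p)" for i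
    by (intro differentiable_scaleR differentiable_const differentiable_partial_eta[OF p])
  hence "(\<lambda>r. \<Sum>i\<in>UNIV. v$i *\<^sub>R frechet_derivative eta (at r) (axis i 1)) differentiable (at p)"
    by (intro differentiable_sum) auto
  then obtain D where D: "((\<lambda>r. \<Sum>i\<in>UNIV. v$i *\<^sub>R frechet_derivative eta (at r) (axis i 1))
      has_derivative D) (at p)"
    unfolding differentiable_def by blast
  have "((\<lambda>r. dD eta r v) has_derivative D) (at p)"
  proof (rule has_derivative_transform_within_open[OF D open_U p])
    fix r assume r: "r \<in> U"
    show "(\<Sum>i\<in>UNIV. v$i *\<^sub>R frechet_derivative eta (at r) (axis i 1)) = dD eta r v"
      using linear_axis_expansion[OF linear_dD[OF differentiable_eta[OF r]], of v] by (simp add: dD_def)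
  qed
  thus ?thesis by (rule differentiableI)
qed

definition hess_eta :: "real^'n \<Rightarrow> real^'n \<Rightarrow> real^'n \<Rightarrow> real^'n" where
  "hess_eta p v u = dD (\<lambda>r. dD eta r v) p u"

lemma has_derivative_dD_eta: assumes p: "p \<in> U"
  shows "((\<lambda>r. dD eta r v \<bullet> w) has_derivative (\<lambda>u. hess_eta p v u \<bullet> w)) (at p)"
  unfolding hess_eta_def using has_derivative_inner_left[OF has_derivative_dD[OF differentiable_dD_eta[OF p]]] .

lemma hess_eta_sym: assumes p: "p \<in> U" shows "hess_eta p v u \<bullet> w = hess_eta p u v \<bullet> w"
proof -
  have "((\<lambda>r. eta r \<bullet> w) has_derivative (\<lambda>u. dD eta x u \<bullet> w)) (at x)" if "x \<in> U" for x
    using has_derivative_inner_left[OF has_derivative_dD[OF differentiable_eta[OF that]]] .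
  from second_derivative_symmetric[OF open_U p this has_derivative_dD_eta[OF p]]
  show ?thesis .
qed

end

locale weak_acm_h_zero = weak_acm_structure +
  assumes h_zero: "\<And>q v. q \<in> U \<Longrightarrow> nablaV G xi q v + F q *v v = 0"
begin

lemma dD_xi: "q \<in> U \<Longrightarrow> dD xi q v = - (F q *v v) - christoffel G q v (xi q)"
  using h_zero[of q v] unfolding nablaV_def by (simp add: algebra_simps eq_neg_iff_add_eq_0)

lemma dD_eta: assumes q: "q \<in> U"
  shows "dD eta q v \<bullet> w = - (w \<bullet> (G q *v (F q *v v))) - w \<bullet> (G q *v christoffel G q v (xi q))
            + w \<bullet> (dD G q v *v xi q)"
proof -
  have d: "((\<lambda>r. G r *v xi r) has_derivative (\<lambda>h. G q *v dD xi q h + dD G q h *v xi q)) (at q)"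
    using has_derivative_matrix_vector_mult[OF has_derivative_dD[OF differentiable_G[OF q]]
        has_derivative_dD[OF differentiable_xi[OF q]]] .
  have "dD eta q v = dD (\<lambda>r. G r *v xi r) q v"
    by (rule dD_transform_within_open[OF _ open_U q]) (auto intro: differentiableI[OF d] simp: eta_eq_G_xi)
  also have "\<dots> = G q *v dD xi q v + dD G q v *v xi q" using dD_eqI[OF d] .
  finally show ?thesis using dD_xi[OF q, of v]
    by (simp add: inner_commute[of _ w] inner_add_right inner_diff_right matrix_vector_right_distrib
        vec.neg vec.diff)
qed

text \<open>This is \<open>d\<eta> = 2\<Phi>\<close>: the metric derivative terms cancel by the Koszul formula.\<close>

lemma alternating_dD_eta: assumes q: "q \<in> U"
  shows "dD eta q v \<bullet> w - dD eta q w \<bullet> v = 2 * (v \<bullet> (G q *v (F q *v w)))"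
proof -
  have "w \<bullet> (G q *v (F q *v v)) = - (v \<bullet> (G q *v (F q *v w)))"
    using metric_F_skew[OF q, of w v] metric_sym[OF q, of "F q *v w" v] by simp
  thus ?thesis
    using dD_eta[OF q, of v w] dD_eta[OF q, of w v]
      metric_christoffel[OF q, of w v "xi q"] metric_christoffel[OF q, of v w "xi q"]
      dD_metric_sym[OF q, of w "xi q" v] by (simp add: algebra_simps)
qed

lemma alternating_hess_eta: assumes p: "p \<in> U"
  shows "hess_eta p v u \<bullet> w - hess_eta p w u \<bullet> v = 2 * dPhi p u v w"
proof -
  have d: "((\<lambda>r. dD eta r v \<bullet> w - dD eta r w \<bullet> v) has_derivative
      (\<lambda>u. hess_eta p v u \<bullet> w - hess_eta p w u \<bullet> v)) (at p)"
    using has_derivative_diff[OF has_derivative_dD_eta[OF p] has_derivative_dD_eta[OF p]] .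
  have d2: "((\<lambda>r. 2 * (v \<bullet> (G r *v (F r *v w)))) has_derivative (\<lambda>u. 2 * dPhi p u v w)) (at p)"
    using has_derivative_mult_right[OF has_derivative_Phi[OF p]] .
  have "dD (\<lambda>r. dD eta r v \<bullet> w - dD eta r w \<bullet> v) p u = dD (\<lambda>r. 2 * (v \<bullet> (G r *v (F r *v w)))) p u"
    by (rule dD_transform_within_open[OF differentiableI[OF d2] open_U p]) (simp add: alternating_dD_eta)
  thus ?thesis using dD_eqI[OF d] dD_eqI[OF d2] by simp
qed

text \<open>With constant vector fields in the chart, \<open>d\<Phi>(u, v, w)\<close> is this cyclic sum; it
  vanishes because \<open>d\<Phi> = d(d\<eta>)/2\<close> and the Hessian of \<open>\<eta>\<close> is symmetric.\<close>

lemma Phi_closed: assumes p: "p \<in> U" shows "dPhi p u v w + dPhi p v w u + dPhi p w u v = 0"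
  using alternating_hess_eta[OF p, of v u w] alternating_hess_eta[OF p, of w v u]
    alternating_hess_eta[OF p, of u w v] hess_eta_sym[OF p, of v u w] hess_eta_sym[OF p, of w u v]
    hess_eta_sym[OF p, of w v u]
  by linarith

end

theorem mainTheorem13:
  fixes n :: nat and U :: "(real^'n) set"
    and F Q G :: "real^'n \<Rightarrow> real^'n^'n" and xi eta :: "real^'n \<Rightarrow> real^'n"
  assumes wns: "weak_nearly_sasakian n U F Q xi eta G"
    and Qt: "\<forall>p\<in>U. \<forall>v w. eta p \<bullet> w = 0 \<longrightarrow> nablaT G (\<lambda>q. Q q - mat 1) p v w = 0"
  defines "h \<equiv> (\<lambda>p v. nablaV G xi p v + F p *v v)"
  shows "(\<forall>p\<in>U. \<forall>v. h p v = 0) \<longleftrightarrow> sasakian n U F Q xi eta G"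
proof -
  have wacm: "weak_almost_contact_metric n U F Q xi eta G"
    and nearly: "\<And>p v w. p \<in> U \<Longrightarrow> nablaT G F p v w + nablaT G F p w v
        = (2 * gm G p v w) *\<^sub>R xi p - (eta p \<bullet> w) *\<^sub>R v - (eta p \<bullet> v) *\<^sub>R w"
    using wns by (auto simp: weak_nearly_sasakian_def)
  interpret weak_acm_structure n U F Q xi eta G using wacm by unfold_locales
  show ?thesis
  proof
    assume "\<forall>p\<in>U. \<forall>v. h p v = 0"
    then interpret weak_acm_h_zero n U F Q xi eta G by unfold_locales (simp add: h_def)
    have "nablaV G xi p v = - (F p *v v)" if "p \<in> U" for p v
      using h_zero[OF that] by (simp add: eq_neg_iff_add_eq_0)
    moreover note sasakian_identity[OF _ nearly Phi_closed]
    ultimately show "sasakian n U F Q xi eta G"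
      unfolding sasakian_def using wacm sasakian_imp_Q_eq_id by blast
  next
    assume "sasakian n U F Q xi eta G"
    then show "\<forall>p\<in>U. \<forall>v. h p v = 0"
      unfolding sasakian_def h_def using sasakian_imp_nablaV_xi by simp
  qed
qed

end
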